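(* Let $m\geq 3$ be an odd integer and $\ell=\lceil\log_2 m\rceil$. Suppose there is a positive integer $j$ such that $\mathbf t_j\mathbf t_{j+1}=\mathbf t_{m+j}\mathbf t_{m+j+1}$. Then $\mathfrak K(m)<\left(1+\frac{j+1}{m}\right)2^\ell$.
   Context: The Thue–Morse word is $\mathbf t=\mathbf t_1\mathbf t_2\cdots$ where $\mathbf t_i\in\{0,1\}$ has the parity of the number of $1$'s in the binary expansion of $i-1$. For positive integers $\alpha\le\beta$, $\langle\alpha,\beta\rangle=\mathbf t_\alpha\cdots\mathbf t_\beta$. A $k$-anti-power is a word $w_1\cdots w_k$ with $w_1,\dots,w_k$ pairwise distinct words of equal length. For a positive integer $m$, $\mathfrak K(m)$ is the smallest positive integer $k$ such that the prefix $\langle 1,km\rangle$ of $\mathbf t$ is not a $k$-anti-power. *)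

theory Defs
  imports Complex_Main
begin

fun bitcount :: "nat \<Rightarrow> nat" where
  "bitcount n = (if n = 0 then 0 else n mod 2 + bitcount (n div 2))"

(* Thue--Morse word, 1-indexed: t i = parity of bitcount (i - 1), for i \<ge> 1 *)
definition tm :: "nat \<Rightarrow> nat" where
  "tm i = bitcount (i - 1) mod 2"

definition tmfactor :: "nat \<Rightarrow> nat \<Rightarrow> nat list" where
  "tmfactor a b = map tm [a..<b + 1]"

definition is_anti_power_prefix :: "nat \<Rightarrow> nat \<Rightarrow> bool" where
  "is_anti_power_prefix k m \<longleftrightarrow>
     (\<forall>i \<in> {1..k}. \<forall>i' \<in> {1..k}. i \<noteq> i' \<longrightarrow>
        tmfactor ((i - 1) * m + 1) (i * m) \<noteq> tmfactor ((i' - 1) * m + 1) (i' * m))"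

definition frakK :: "nat \<Rightarrow> nat" where
  "frakK m = (LEAST k. k > 0 \<and> \<not> is_anti_power_prefix k m)"

end

theory Submission
  imports Defs
begin

text \<open>Write \<open>N = 2^\<ell> \<ge> m\<close> and let \<open>T n = t\<^sub>n\<^sub>+\<^sub>1\<close> be the 0-indexed Thue--Morse word.
  Since the binary digits of \<open>N x + y\<close> for \<open>y < N\<close> are those of \<open>x\<close> followed by those
  of \<open>y\<close>, we have \<open>T (N x + y) = T x \<oplus> T y\<close>. With \<open>j = q + 1\<close>, the hypothesis says that
  \<open>T\<close> agrees at \<open>q, q + 1\<close> and at \<open>q + m, q + m + 1\<close>; hence \<open>T\<close> agrees on the windows
  \<open>[N q, N q + 2N)\<close> and \<open>[N (q + m), N (q + m) + 2N)\<close>, which differ by the shift \<open>N m\<close>.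
  As \<open>m \<le> N\<close>, some length-\<open>m\<close> block \<open>[a m, a m + m)\<close> lies in the first window, so the
  blocks of the prefix with 0-based indices \<open>a\<close> and \<open>a + N\<close> coincide, and \<open>K(m) \<le> a + N + 1\<close>.\<close>

declare bitcount.simps [simp del]

lemma bitcount_0 [simp]: "bitcount 0 = 0"
  by (simp add: bitcount.simps)

lemma bitcount_eq: "bitcount n = n mod 2 + bitcount (n div 2)"
  by (cases "n = 0") (simp_all add: bitcount.simps[of n])

lemma bitcount_add_mult_power2:
  "y < 2 ^ L \<Longrightarrow> bitcount (2 ^ L * x + y) = bitcount x + bitcount y"
proof (induction L arbitrary: y)
  case 0
  then show ?case by simp
next
  case (Suc L)
  have "y div 2 < 2 ^ L"
    using Suc.prems by (simp add: less_mult_imp_div_less mult.commute)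
  then have "bitcount (2 ^ L * x + y div 2) = bitcount x + bitcount (y div 2)"
    by (rule Suc.IH)
  moreover have "(2 ^ Suc L * x + y) mod 2 = y mod 2"
    and "(2 ^ Suc L * x + y) div 2 = 2 ^ L * x + y div 2"
    by (simp_all add: mult.assoc)
  ultimately show ?case
    using bitcount_eq[of "2 ^ Suc L * x + y"] bitcount_eq[of y] by simp
qed

definition thue_morse :: "nat \<Rightarrow> nat" where
  "thue_morse n = bitcount n mod 2"

lemma tm_Suc: "tm (Suc n) = thue_morse n"
  by (simp add: tm_def thue_morse_def)

lemma thue_morse_add_mult_power2:
  "y < 2 ^ L \<Longrightarrow> thue_morse (2 ^ L * x + y) = (thue_morse x + thue_morse y) mod 2"
  by (simp add: thue_morse_def bitcount_add_mult_power2 mod_add_eq)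

lemma thue_morse_window_shift:
  assumes "thue_morse q = thue_morse (q + s)"
    and "thue_morse (q + 1) = thue_morse (q + s + 1)"
    and "c < 2 * 2 ^ L"
  shows "thue_morse (2 ^ L * q + c) = thue_morse (2 ^ L * (q + s) + c)"
proof (cases "c < 2 ^ L")
  case True
  then show ?thesis
    using assms(1) by (simp add: thue_morse_add_mult_power2)
next
  case False
  define d where "d = c - 2 ^ L"
  have d: "d < 2 ^ L"
    using assms(3) False by (simp add: d_def)
  have "2 ^ L * q + c = 2 ^ L * (q + 1) + d" and "2 ^ L * (q + s) + c = 2 ^ L * (q + s + 1) + d"
    using False by (simp_all add: d_def algebra_simps)
  then show ?thesis
    using assms(2) by (simp only: thue_morse_add_mult_power2[OF d])
qed

lemma tmfactor_block:
  "tmfactor (a * m + 1) ((a + 1) * m) = map (\<lambda>r. thue_morse (a * m + r)) [0..<m]"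
proof -
  have "[a * m + 1..<(a + 1) * m + 1] = map (\<lambda>r. Suc (a * m + r)) [0..<m]"
    by (rule nth_equalityI) (simp_all del: upt_Suc add: nth_upt)
  then show ?thesis
    by (simp add: tmfactor_def tm_Suc comp_def)
qed

lemma frakK_le_if_blocks_eq:
  assumes "a < b" and "tmfactor (a * m + 1) ((a + 1) * m) = tmfactor (b * m + 1) ((b + 1) * m)"
  shows "frakK m \<le> b + 1"
proof -
  have "tmfactor ((a + 1 - 1) * m + 1) ((a + 1) * m) = tmfactor ((b + 1 - 1) * m + 1) ((b + 1) * m)"
    using assms(2) by simp
  moreover have "a + 1 \<in> {1..b + 1}" and "b + 1 \<in> {1..b + 1}" and "a + 1 \<noteq> b + 1"
    using assms(1) by simp_all
  ultimately have "\<not> is_anti_power_prefix (b + 1) m"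
    unfolding is_anti_power_prefix_def by blast
  then show ?thesis
    unfolding frakK_def by (intro Least_le) simp
qed

lemma block_in_window:
  fixes m N q :: nat
  assumes "0 < m" and "m \<le> N"
  obtains a where "N * q \<le> a * m" and "a * m + m < N * (q + 2)"
proof
  define a where "a = (N * q + m - 1) div m"
  show "N * q \<le> a * m"
    using assms(1) div_mult_mod_eq[of "N * q + m - 1" m] mod_less_divisor[of m "N * q + m - 1"]
    unfolding a_def by linarith
  have "a * m \<le> N * q + m - 1"
    unfolding a_def by (rule div_times_less_eq_dividend)
  then show "a * m + m < N * (q + 2)"
    using assms by (simp add: algebra_simps)
qed

theorem lemma4:
  fixes m j :: nat
  assumes "m \<ge> 3" and "odd m" and "j > 0"
    and "tm j = tm (m + j)" and "tm (j + 1) = tm (m + j + 1)"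
  shows "real (frakK m) < (1 + real (j + 1) / real m) * 2 ^ (nat \<lceil>log 2 (real m)\<rceil>)"
proof -
  define L where "L = nat \<lceil>log 2 (real m)\<rceil>"
  define N :: nat where "N = 2 ^ L"
  have m: "0 < m" using assms(1) by simp
  have "real m \<le> 2 ^ L"
    unfolding L_def by (rule power_of_nat_log_ge) simp
  then have "m \<le> N"
    unfolding N_def by (metis of_nat_le_iff of_nat_numeral of_nat_power)
  obtain q where j: "j = q + 1"
    using assms(3) by (metis Suc_eq_plus1 gr0_implies_Suc)
  have shift: "thue_morse q = thue_morse (q + m)" "thue_morse (q + 1) = thue_morse (q + m + 1)"
    using assms(4,5) by (simp_all add: j tm_Suc add.commute)
  obtain a where lo: "N * q \<le> a * m" and hi: "a * m + m < N * (q + 2)"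
    using block_in_window[OF m \<open>m \<le> N\<close>] .
  have "thue_morse (a * m + r) = thue_morse ((a + N) * m + r)" if "r < m" for r
  proof -
    define c where "c = a * m + r - N * q"
    have "c < 2 * 2 ^ L" and "a * m + r = N * q + c" and "(a + N) * m + r = N * (q + m) + c"
      using lo hi that by (simp_all add: c_def N_def algebra_simps)
    then show ?thesis
      using thue_morse_window_shift[OF shift] by (simp add: N_def)
  qed
  then have "tmfactor (a * m + 1) ((a + 1) * m) = tmfactor ((a + N) * m + 1) ((a + N + 1) * m)"
    unfolding tmfactor_block by simp
  then have "frakK m \<le> a + N + 1"
    by (rule frakK_le_if_blocks_eq[rotated]) (simp add: N_def)
  moreover have "m * (a + N + 1) < (m + j + 1) * N"
    using hi by (simp add: j algebra_simps)
  ultimately have "real m * real (frakK m) < real (m + j + 1) * real N"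
    by (metis le_less_trans mult_le_mono2 of_nat_less_iff of_nat_mult)
  then show ?thesis
    using m by (simp add: N_def L_def field_simps)
qed

end
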